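(* Let $\mathcal{H}$ be a finite family of rooted digraphs, $D$ a digraph, $k$ an integer and $W\subseteq V(D)$ an $\mathcal{H}$-deletion set of $D$ of size at most $k+1$. Then $D$ has an $\mathcal{H}$-deletion set of size at most $k$ disjoint from $W$ if and only if there exists an ordered partition $\mathcal{S}=(S_1,\ldots,S_q)$ of $W$ such that the instance $(D,\mathcal{S},W,k)$ has a nice solution.
   Context: Subgraphs are not necessarily induced; strong components are maximal sets of mutually reachable vertices. A digraph $F$ is rooted if some vertex of $F$ reaches all vertices of $F$ in $F$; for each such $F$ one such vertex is fixed canonically and denoted $r(F)$ (its root). $X\subseteq V(D)$ is an $\mathcal{H}$-deletion set of $D$ if no strong component of $D-X$ contains a subgraph isomorphic to a graph in $\mathcal{H}$. For $A\subseteq V(D)$ and $Y\subseteq V(D)$, $R(A,Y)$ denotes the set of vertices reachable by a directed path from a vertex of $A$ in $D-Y$. Given an ordered partition $\mathcal{S}=(S_1,\dots,S_q)$ of $W$, a solution for $(D,\mathcal{S},W,k)$ is a set $X\subseteq V(D)$ with $|X|\le k$, $X\cap W=\emptyset$, $X$ an $\mathcal{H}$-deletion set of $D$, and $X$ intersecting every directed $S_i$-$S_j$ path in $D$ for all $i<j$. A solution $X$ is nice if for every subgraph $F\subseteq D$ isomorphic to a graph in $\mathcal{H}$ and every $i\in[q]$, at least one holds: (1) $X\cap V(F)\neq\emptyset$; (2) $r(F)\notin R(S_i,X)$; (3) there is $v\in V(F)$ such that $D-X$ has no directed path from $v$ to $S_i$. *)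

theory Defs
  imports Main
begin

type_synonym 'a digraph = "'a set \<times> ('a \<times> 'a) set"

definition verts :: "'a digraph \<Rightarrow> 'a set" where "verts D = fst D"
definition arcs :: "'a digraph \<Rightarrow> ('a \<times> 'a) set" where "arcs D = snd D"

definition digraph :: "'a digraph \<Rightarrow> bool" where
  "digraph D \<longleftrightarrow> finite (verts D) \<and> arcs D \<subseteq> verts D \<times> verts D"

definition subgraph :: "'a digraph \<Rightarrow> 'a digraph \<Rightarrow> bool" where
  "subgraph F D \<longleftrightarrow> digraph F \<and> verts F \<subseteq> verts D \<and> arcs F \<subseteq> arcs D"

definition isomorphic :: "'a digraph \<Rightarrow> 'b digraph \<Rightarrow> bool" where
  "isomorphic F H \<longleftrightarrow> (\<exists>f. bij_betw f (verts F) (verts H) \<and>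
     (\<forall>u\<in>verts F. \<forall>v\<in>verts F. (u, v) \<in> arcs F \<longleftrightarrow> (f u, f v) \<in> arcs H))"

definition reach :: "'a digraph \<Rightarrow> 'a \<Rightarrow> 'a \<Rightarrow> bool" where
  "reach D u v \<longleftrightarrow> u \<in> verts D \<and> v \<in> verts D \<and> (u, v) \<in> (arcs D)\<^sup>*"

definition dpath :: "'a digraph \<Rightarrow> 'a list \<Rightarrow> bool" where
  "dpath D p \<longleftrightarrow> p \<noteq> [] \<and> set p \<subseteq> verts D \<and>
     (\<forall>i. Suc i < length p \<longrightarrow> (p ! i, p ! Suc i) \<in> arcs D)"

definition rooted :: "'a digraph \<Rightarrow> bool" where
  "rooted F \<longleftrightarrow> (\<exists>r\<in>verts F. \<forall>v\<in>verts F. reach F r v)"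

definition root_choice :: "('a digraph \<Rightarrow> 'a) \<Rightarrow> bool" where
  "root_choice r \<longleftrightarrow> (\<forall>F. digraph F \<and> rooted F \<longrightarrow>
      r F \<in> verts F \<and> (\<forall>v\<in>verts F. reach F (r F) v))"

definition induced :: "'a digraph \<Rightarrow> 'a set \<Rightarrow> 'a digraph" where
  "induced D C = (C, arcs D \<inter> (C \<times> C))"

definition del :: "'a digraph \<Rightarrow> 'a set \<Rightarrow> 'a digraph" where
  "del D X = induced D (verts D - X)"

definition strong_component :: "'a digraph \<Rightarrow> 'a set \<Rightarrow> bool" where
  "strong_component D C \<longleftrightarrow> (\<exists>u\<in>verts D. C = {v. reach D u v \<and> reach D v u})"

definition H_deletion_set :: "'b digraph set \<Rightarrow> 'a digraph \<Rightarrow> 'a set \<Rightarrow> bool" where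
  "H_deletion_set Hs D X \<longleftrightarrow> X \<subseteq> verts D \<and>
     (\<forall>C. strong_component (del D X) C \<longrightarrow>
        \<not> (\<exists>F. \<exists>H\<in>Hs. subgraph F (induced (del D X) C) \<and> isomorphic F H))"

definition Rset :: "'a digraph \<Rightarrow> 'a set \<Rightarrow> 'a set \<Rightarrow> 'a set" where
  "Rset D A Y = {v. \<exists>a\<in>A. reach (del D Y) a v}"

definition ordered_partition :: "'a set list \<Rightarrow> 'a set \<Rightarrow> bool" where
  "ordered_partition Ss W \<longleftrightarrow> (\<forall>i<length Ss. Ss ! i \<noteq> {}) \<and>
     (\<forall>i j. i < j \<and> j < length Ss \<longrightarrow> Ss ! i \<inter> Ss ! j = {}) \<and> \<Union> (set Ss) = W"

definition solution :: "'b digraph set \<Rightarrow> 'a digraph \<Rightarrow> 'a set list \<Rightarrow> 'a set \<Rightarrow> int \<Rightarrow> 'a set \<Rightarrow> bool" where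
  "solution Hs D Ss W k X \<longleftrightarrow> X \<subseteq> verts D \<and> int (card X) \<le> k \<and> X \<inter> W = {} \<and>
     H_deletion_set Hs D X \<and>
     (\<forall>i j p. i < j \<and> j < length Ss \<and> dpath D p \<and> hd p \<in> Ss ! i \<and> last p \<in> Ss ! j
        \<longrightarrow> set p \<inter> X \<noteq> {})"

definition nice_solution :: "'b digraph set \<Rightarrow> ('a digraph \<Rightarrow> 'a) \<Rightarrow> 'a digraph \<Rightarrow> 'a set list
    \<Rightarrow> 'a set \<Rightarrow> int \<Rightarrow> 'a set \<Rightarrow> bool" where
  "nice_solution Hs r D Ss W k X \<longleftrightarrow> solution Hs D Ss W k X \<and>
     (\<forall>F. (subgraph F D \<and> (\<exists>H\<in>Hs. isomorphic F H)) \<longrightarrow>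
        (\<forall>i<length Ss.
           X \<inter> verts F \<noteq> {} \<or>
           r F \<notin> Rset D (Ss ! i) X \<or>
           (\<exists>v\<in>verts F. \<not> (\<exists>s\<in>Ss ! i. reach (del D X) v s))))"

end

theory Submission
  imports Defs
begin

(* Given an H-deletion set X of size at most k avoiding W, group W into the classes of mutual
   reachability in D - X and list them so that no class reaches a later one, which is possible
   because these classes carry a finite partial order. X then meets every S_i-S_j path with i < j.
   It is also nice: a copy F of a member of H that avoids X, whose root is reachable from S_i and
   all of whose vertices reach S_i, lies inside the strong component of D - X containing S_i,
   which X forbids. The converse is immediate. *)

lemma finite_preorder_has_maximal:
  assumes "finite A" "A \<noteq> {}" "\<forall>a\<in>A. R a a"
    and "\<forall>a\<in>A. \<forall>b\<in>A. \<forall>c\<in>A. R a b \<longrightarrow> R b c \<longrightarrow> R a c"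
  obtains m where "m \<in> A" "\<And>a. a \<in> A \<Longrightarrow> R m a \<Longrightarrow> R a m"
proof -
  let ?up = "\<lambda>x. {a \<in> A. R x a}"
  obtain m where m: "m \<in> A" and least: "\<And>y. y \<in> A \<Longrightarrow> card (?up m) \<le> card (?up y)"
    using assms(2) ex_has_least_nat[of "\<lambda>x. x \<in> A" _ "\<lambda>x. card (?up x)"] by blast
  have "R a m" if "a \<in> A" "R m a" for a
  proof (rule ccontr)
    assume "\<not> R a m"
    then have "?up a \<subset> ?up m"
      using assms(3,4) m that by blast
    then have "card (?up a) < card (?up m)"
      using assms(1) by (simp add: psubset_card_mono)
    with least[OF \<open>a \<in> A\<close>] show False by simp
  qed
  with m show thesis by (rule that)
qed

lemma ordered_partition_Cons:
  "S \<noteq> {} \<Longrightarrow> S \<subseteq> A \<Longrightarrow> ordered_partition Ss (A - S) \<Longrightarrow> ordered_partition (S # Ss) A"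
  unfolding ordered_partition_def
  by (auto simp: nth_Cons split: nat.split)

lemma ordered_partition_subset:
  "ordered_partition Ss A \<Longrightarrow> i < length Ss \<Longrightarrow> Ss ! i \<subseteq> A"
  unfolding ordered_partition_def by (metis Union_upper nth_mem)

lemma ordered_partition_by_preorder:
  assumes "finite A" "\<forall>a\<in>A. R a a"
    and "\<forall>a\<in>A. \<forall>b\<in>A. \<forall>c\<in>A. R a b \<longrightarrow> R b c \<longrightarrow> R a c"
  shows "\<exists>Ss. ordered_partition Ss A
    \<and> (\<forall>i<length Ss. \<forall>u\<in>Ss ! i. \<forall>v\<in>Ss ! i. R u v)
    \<and> (\<forall>i j. i < j \<and> j < length Ss \<longrightarrow> (\<forall>u\<in>Ss ! i. \<forall>v\<in>Ss ! j. \<not> R u v))"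
  using assms
proof (induction A rule: finite_psubset_induct)
  case (psubset A)
  show ?case
  proof (cases "A = {}")
    case True
    then show ?thesis by (intro exI[of _ "[]"]) (simp add: ordered_partition_def)
  next
    case False
    obtain m where m: "m \<in> A" and maximal: "\<And>a. a \<in> A \<Longrightarrow> R m a \<Longrightarrow> R a m"
      using finite_preorder_has_maximal[OF psubset.hyps(1) False psubset.prems] by blast
    have trans: "R a c" if "a \<in> A" "b \<in> A" "c \<in> A" "R a b" "R b c" for a b c
      using psubset.prems(2) that by blast
    define S where "S = {a \<in> A. R m a \<and> R a m}"
    have "m \<in> S" using m psubset.prems(1) by (simp add: S_def)
    then have smaller: "A - S \<subset> A" by (auto simp: S_def)
    have "\<forall>a\<in>A - S. R a a" using psubset.prems(1) by blast
    moreover have "\<forall>a\<in>A - S. \<forall>b\<in>A - S. \<forall>c\<in>A - S. R a b \<longrightarrow> R b c \<longrightarrow> R a c"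
      using trans by blast
    ultimately obtain Ss where part: "ordered_partition Ss (A - S)"
      and inside: "\<forall>i<length Ss. \<forall>u\<in>Ss ! i. \<forall>v\<in>Ss ! i. R u v"
      and ordered: "\<forall>i j. i < j \<and> j < length Ss \<longrightarrow> (\<forall>u\<in>Ss ! i. \<forall>v\<in>Ss ! j. \<not> R u v)"
      using psubset.IH[OF smaller] by blast
    have S_inside: "\<forall>u\<in>S. \<forall>v\<in>S. R u v"
      using trans m unfolding S_def by blast
    have S_first: "\<not> R u v" if "u \<in> S" "v \<in> A - S" for u v
    proof
      assume "R u v"
      then have "R m v" using trans m that unfolding S_def by blast
      with maximal that show False unfolding S_def by blast
    qed
    show ?thesis
    proof (intro exI[of _ "S # Ss"] conjI allI impI ballI)
      show "ordered_partition (S # Ss) A"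
        using ordered_partition_Cons[OF _ _ part] \<open>m \<in> S\<close> by (auto simp: S_def)
    next
      fix i u v assume "i < length (S # Ss)" "u \<in> (S # Ss) ! i" "v \<in> (S # Ss) ! i"
      then show "R u v" using S_inside inside by (cases i) auto
    next
      fix i j u v assume "i < j \<and> j < length (S # Ss)" "u \<in> (S # Ss) ! i" "v \<in> (S # Ss) ! j"
      then obtain j' where j': "j = Suc j'" "j' < length Ss" "v \<in> Ss ! j'"
        by (cases j) auto
      show "\<not> R u v"
      proof (cases i)
        case 0
        then show ?thesis
          using S_first \<open>u \<in> (S # Ss) ! i\<close> ordered_partition_subset[OF part] j' by auto
      next
        case (Suc i')
        then show ?thesis
          using ordered \<open>i < j \<and> j < length (S # Ss)\<close> \<open>u \<in> (S # Ss) ! i\<close> j' by auto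
      qed
    qed
  qed
qed

lemma verts_induced [simp]: "verts (induced D C) = C"
  by (simp add: induced_def verts_def)

lemma arcs_induced [simp]: "arcs (induced D C) = arcs D \<inter> C \<times> C"
  by (simp add: induced_def arcs_def)

lemma verts_del [simp]: "verts (del D X) = verts D - X"
  by (simp add: del_def)

lemma arcs_del [simp]: "arcs (del D X) = arcs D \<inter> (verts D - X) \<times> (verts D - X)"
  by (simp add: del_def)

lemma reach_refl: "v \<in> verts D \<Longrightarrow> reach D v v"
  by (simp add: reach_def)

lemma reach_trans: "reach D u v \<Longrightarrow> reach D v w \<Longrightarrow> reach D u w"
  unfolding reach_def by (meson rtrancl_trans)

lemma reach_hom:
  assumes "digraph D" "g ` verts D \<subseteq> verts E"
    and "\<And>u v. (u, v) \<in> arcs D \<Longrightarrow> (g u, g v) \<in> arcs E"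
    and "reach D u v"
  shows "reach E (g u) (g v)"
proof -
  have "(u, v) \<in> (arcs D)\<^sup>*" "u \<in> verts D" "v \<in> verts D"
    using assms(4) by (auto simp: reach_def)
  then show ?thesis
  proof (induction rule: rtrancl_induct)
    case base
    then show ?case using assms(2) by (auto simp: reach_def)
  next
    case (step v w)
    have "v \<in> verts D" using step.hyps(2) assms(1) by (auto simp: digraph_def)
    then have "reach E (g u) (g v)" using step.IH step.prems(1) by blast
    moreover have "reach E (g v) (g w)"
      using assms(2,3) step.hyps(2) step.prems(2) \<open>v \<in> verts D\<close> by (auto simp: reach_def)
    ultimately show ?case by (rule reach_trans)
  qed
qed

lemma reach_subgraph: "subgraph F D \<Longrightarrow> reach F u v \<Longrightarrow> reach D u v"
  using reach_hom[of F id D] by (auto simp: subgraph_def)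

lemma rooted_if_isomorphic:
  assumes "isomorphic F H" "digraph H" "rooted H"
  shows "rooted F"
proof -
  obtain f where bij: "bij_betw f (verts F) (verts H)"
    and iso: "\<forall>u\<in>verts F. \<forall>v\<in>verts F. (u, v) \<in> arcs F \<longleftrightarrow> (f u, f v) \<in> arcs H"
    using assms(1) unfolding isomorphic_def by blast
  obtain h where h: "h \<in> verts H" "\<forall>v\<in>verts H. reach H h v"
    using assms(3) unfolding rooted_def by blast
  define g where "g = inv_into (verts F) f"
  have g_verts: "g ` verts H \<subseteq> verts F"
    using bij unfolding g_def by (metis bij_betw_def image_subsetI inv_into_into)
  have f_g: "f (g w) = w" if "w \<in> verts H" for w
    using that bij unfolding g_def by (meson bij_betw_inv_into_right)
  have g_arcs: "(g u, g v) \<in> arcs F" if "(u, v) \<in> arcs H" for u v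
  proof -
    have "u \<in> verts H" "v \<in> verts H" using that assms(2) by (auto simp: digraph_def)
    then show ?thesis using iso g_verts f_g that by (metis image_subset_iff)
  qed
  have "reach F (g h) v" if "v \<in> verts F" for v
  proof -
    have "reach F (g h) (g (f v))"
      using reach_hom[OF assms(2) g_verts g_arcs] h that bij by (meson bij_betw_apply)
    then show ?thesis using that bij unfolding g_def by (metis bij_betw_inv_into_left)
  qed
  then show ?thesis using g_verts h(1) unfolding rooted_def by blast
qed

lemma ordered_partition_by_reach:
  assumes "finite W" "W \<subseteq> verts G"
  shows "\<exists>Ss. ordered_partition Ss W
    \<and> (\<forall>i<length Ss. \<forall>u\<in>Ss ! i. \<forall>v\<in>Ss ! i. reach G u v)
    \<and> (\<forall>i j. i < j \<and> j < length Ss \<longrightarrow> (\<forall>u\<in>Ss ! i. \<forall>v\<in>Ss ! j. \<not> reach G u v))"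
proof (rule ordered_partition_by_preorder[OF assms(1)])
  show "\<forall>a\<in>W. reach G a a" using assms(2) by (auto intro!: reach_refl)
  show "\<forall>a\<in>W. \<forall>b\<in>W. \<forall>c\<in>W. reach G a b \<longrightarrow> reach G b c \<longrightarrow> reach G a c"
    by (intro ballI impI) (rule reach_trans)
qed

lemma dpath_Cons_Cons:
  "dpath D (a # b # p) \<longleftrightarrow> a \<in> verts D \<and> (a, b) \<in> arcs D \<and> dpath D (b # p)"
  by (auto simp: dpath_def nth_Cons split: nat.split)

lemma dpath_reach_del:
  "dpath D p \<Longrightarrow> set p \<inter> X = {} \<Longrightarrow> reach (del D X) (hd p) (last p)"
proof (induction p rule: induct_list012)
  case 1
  then show ?case by (simp add: dpath_def)
next
  case (2 a)
  then show ?case by (auto simp: dpath_def reach_def)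
next
  case (3 a b p)
  then have "a \<in> verts D" "(a, b) \<in> arcs D" and "dpath D (b # p)"
    by (simp_all add: dpath_Cons_Cons)
  then have "reach (del D X) a b"
    using "3.prems"(2) by (auto simp: dpath_def reach_def)
  moreover have "reach (del D X) b (last (b # p))"
    using 3 \<open>dpath D (b # p)\<close> by simp
  ultimately show ?case by (auto intro: reach_trans)
qed

lemma subgraph_del: "subgraph F D \<Longrightarrow> verts F \<inter> X = {} \<Longrightarrow> subgraph F (del D X)"
  by (auto simp: subgraph_def digraph_def)

lemma subgraph_induced: "subgraph F D \<Longrightarrow> verts F \<subseteq> C \<Longrightarrow> subgraph F (induced D C)"
  by (auto simp: subgraph_def digraph_def)

lemma H_deletion_set_copy_not_strongly_connected:
  assumes "H_deletion_set Hs D X" "H \<in> Hs" "isomorphic F H" "subgraph F (del D X)"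
    and "a \<in> verts D - X"
  shows "\<exists>v\<in>verts F. \<not> (reach (del D X) a v \<and> reach (del D X) v a)"
proof (rule ccontr)
  let ?C = "{v. reach (del D X) a v \<and> reach (del D X) v a}"
  assume "\<not> ?thesis"
  then have "verts F \<subseteq> ?C" by blast
  with assms(4) have "subgraph F (induced (del D X) ?C)" by (rule subgraph_induced)
  moreover have "strong_component (del D X) ?C"
    unfolding strong_component_def using assms(5) by auto
  ultimately show False
    using assms(1-3) unfolding H_deletion_set_def by blast
qed

lemma solution_if_parts_unreachable:
  assumes "H_deletion_set Hs D X" "int (card X) \<le> k" "X \<inter> W = {}"
    and "\<forall>i j. i < j \<and> j < length Ss \<longrightarrow> (\<forall>u\<in>Ss ! i. \<forall>v\<in>Ss ! j. \<not> reach (del D X) u v)"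
  shows "solution Hs D Ss W k X"
  unfolding solution_def
proof (intro conjI allI impI)
  fix i j p
  assume "i < j \<and> j < length Ss \<and> dpath D p \<and> hd p \<in> Ss ! i \<and> last p \<in> Ss ! j"
  then show "set p \<inter> X \<noteq> {}"
    using assms(4) dpath_reach_del by blast
qed (use assms in \<open>auto simp: H_deletion_set_def\<close>)

lemma nice_solution_if_parts_strongly_connected:
  assumes "solution Hs D Ss W k X" "root_choice r" "\<forall>H\<in>Hs. digraph H \<and> rooted H"
    and "\<forall>i<length Ss. \<forall>u\<in>Ss ! i. \<forall>v\<in>Ss ! i. reach (del D X) u v"
  shows "nice_solution Hs r D Ss W k X"
  unfolding nice_solution_def
proof (intro conjI assms(1) allI impI)
  fix F i
  assume F: "subgraph F D \<and> (\<exists>H\<in>Hs. isomorphic F H)" and i: "i < length Ss"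
  let ?G = "del D X"
  obtain H where H: "H \<in> Hs" "isomorphic F H" using F by blast
  have "rooted F" using rooted_if_isomorphic H assms(3) by blast
  then have root: "\<forall>v\<in>verts F. reach F (r F) v"
    using assms(2) F unfolding root_choice_def subgraph_def by blast
  show "X \<inter> verts F \<noteq> {} \<or> r F \<notin> Rset D (Ss ! i) X \<or>
      (\<exists>v\<in>verts F. \<not> (\<exists>s\<in>Ss ! i. reach ?G v s))"
  proof (rule ccontr)
    assume "\<not> ?thesis"
    then have disjoint: "X \<inter> verts F = {}"
      and "r F \<in> Rset D (Ss ! i) X"
      and returns: "\<forall>v\<in>verts F. \<exists>s\<in>Ss ! i. reach ?G v s"
      by auto
    then obtain a where a: "a \<in> Ss ! i" "reach ?G a (r F)" by (auto simp: Rset_def)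
    have FG: "subgraph F ?G" using F disjoint subgraph_del by blast
    have "reach ?G a v \<and> reach ?G v a" if v: "v \<in> verts F" for v
    proof
      show "reach ?G a v"
        using reach_trans[OF a(2) reach_subgraph[OF FG]] root v by blast
      obtain s where s: "s \<in> Ss ! i" "reach ?G v s" using returns v by blast
      have "reach ?G s a" using assms(4) i a(1) s(1) by blast
      with s(2) show "reach ?G v a" by (rule reach_trans)
    qed
    moreover have "a \<in> verts D - X"
      using assms(4) i a(1) by (auto simp: reach_def)
    moreover have "H_deletion_set Hs D X" using assms(1) by (simp add: solution_def)
    ultimately show False
      using H_deletion_set_copy_not_strongly_connected[OF _ H FG] by blast
  qed
qed

theorem lemma8:
  fixes Hs :: "'b digraph set" and D :: "'a digraph" and r :: "'a digraph \<Rightarrow> 'a"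
    and k :: int and W :: "'a set"
  assumes "finite Hs"
    and "\<forall>H\<in>Hs. digraph H \<and> rooted H"
    and "digraph D"
    and "root_choice r"
    and "H_deletion_set Hs D W"
    and "int (card W) \<le> k + 1"
  shows "(\<exists>X. H_deletion_set Hs D X \<and> int (card X) \<le> k \<and> X \<inter> W = {}) \<longleftrightarrow>
         (\<exists>Ss. ordered_partition Ss W \<and> (\<exists>X. nice_solution Hs r D Ss W k X))"
proof
  assume "\<exists>X. H_deletion_set Hs D X \<and> int (card X) \<le> k \<and> X \<inter> W = {}"
  then obtain X where X: "H_deletion_set Hs D X" "int (card X) \<le> k" "X \<inter> W = {}"
    by blast
  have "W \<subseteq> verts D" using assms(5) by (simp add: H_deletion_set_def)
  then have "finite W" "W \<subseteq> verts (del D X)"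
    using assms(3) X(3) by (auto simp: digraph_def intro: finite_subset)
  then obtain Ss where "ordered_partition Ss W"
    and inside: "\<forall>i<length Ss. \<forall>u\<in>Ss ! i. \<forall>v\<in>Ss ! i. reach (del D X) u v"
    and ordered: "\<forall>i j. i < j \<and> j < length Ss \<longrightarrow>
      (\<forall>u\<in>Ss ! i. \<forall>v\<in>Ss ! j. \<not> reach (del D X) u v)"
    using ordered_partition_by_reach[of W "del D X"] by blast
  moreover have "nice_solution Hs r D Ss W k X"
    using solution_if_parts_unreachable[OF X ordered] inside assms(2,4)
    by (intro nice_solution_if_parts_strongly_connected)
  ultimately show "\<exists>Ss. ordered_partition Ss W \<and> (\<exists>X. nice_solution Hs r D Ss W k X)"
    by blast
next
  assume "\<exists>Ss. ordered_partition Ss W \<and> (\<exists>X. nice_solution Hs r D Ss W k X)"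
  then show "\<exists>X. H_deletion_set Hs D X \<and> int (card X) \<le> k \<and> X \<inter> W = {}"
    unfolding nice_solution_def solution_def by blast
qed

end
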